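(* Let $\Gamma$ be a finite vertex-transitive graph and suppose $S$ is a $k$-extended irregular dominating set of $\Gamma$. Then $S$ is optimal and $k=\gamma_e(\Gamma)=\mathrm{diam}(\Gamma)+1$. Moreover, the labels of the $k$ vertices of $S$ are exactly all the elements of $\{0,1,\dots,\mathrm{diam}(\Gamma)\}$.
   Context: Let $\Gamma=(V,E)$ be a finite simple undirected graph with graph distance $d$; $\mathrm{diam}(\Gamma)$ is the largest distance between two vertices. A vertex $v$ carrying a non-negative integer label $\ell$ dominates (covers) exactly the vertices $u$ with $d(u,v)=\ell$; a vertex labeled $0$ dominates only itself. For $k\ge0$, a $k$-extended irregular dominating set is a set $S\subseteq V$ of $k$ vertices together with a labeling $\lambda:S\to\mathbb{Z}_{\ge 0}$ with distinct labels on distinct vertices, such that every vertex of $V$ is dominated by at least one vertex of $S$; it is assumed that some vertex of $S$ has label $0$. The extended irregular domination number $\gamma_e(\Gamma)$ is the minimum cardinality of an extended irregular dominating set of $\Gamma$; a $k$-extended irregular dominating set is optimal if $k=\gamma_e(\Gamma)$. *)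

theory Defs
  imports Main
begin

definition simple_graph :: "'a set \<Rightarrow> ('a \<Rightarrow> 'a \<Rightarrow> bool) \<Rightarrow> bool" where
  "simple_graph V E \<longleftrightarrow> finite V \<and> (\<forall>u\<in>V. \<forall>v\<in>V. E u v \<longleftrightarrow> E v u) \<and> (\<forall>v\<in>V. \<not> E v v)"

inductive walk :: "'a set \<Rightarrow> ('a \<Rightarrow> 'a \<Rightarrow> bool) \<Rightarrow> 'a \<Rightarrow> 'a \<Rightarrow> nat \<Rightarrow> bool"
  for V E where
  walk_nil: "u \<in> V \<Longrightarrow> walk V E u u 0"
| walk_cons: "u \<in> V \<Longrightarrow> w \<in> V \<Longrightarrow> E u w \<Longrightarrow> walk V E w v n \<Longrightarrow> walk V E u v (Suc n)"

definition connected_graph :: "'a set \<Rightarrow> ('a \<Rightarrow> 'a \<Rightarrow> bool) \<Rightarrow> bool" where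
  "connected_graph V E \<longleftrightarrow> (\<forall>u\<in>V. \<forall>v\<in>V. \<exists>n. walk V E u v n)"

definition gdist :: "'a set \<Rightarrow> ('a \<Rightarrow> 'a \<Rightarrow> bool) \<Rightarrow> 'a \<Rightarrow> 'a \<Rightarrow> nat" where
  "gdist V E u v = (LEAST n. walk V E u v n)"

definition diam :: "'a set \<Rightarrow> ('a \<Rightarrow> 'a \<Rightarrow> bool) \<Rightarrow> nat" where
  "diam V E = Max {gdist V E u v | u v. u \<in> V \<and> v \<in> V}"

definition graph_automorphism :: "'a set \<Rightarrow> ('a \<Rightarrow> 'a \<Rightarrow> bool) \<Rightarrow> ('a \<Rightarrow> 'a) \<Rightarrow> bool" where
  "graph_automorphism V E f \<longleftrightarrow> bij_betw f V V \<and> (\<forall>x\<in>V. \<forall>y\<in>V. E x y \<longleftrightarrow> E (f x) (f y))"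

definition vertex_transitive :: "'a set \<Rightarrow> ('a \<Rightarrow> 'a \<Rightarrow> bool) \<Rightarrow> bool" where
  "vertex_transitive V E \<longleftrightarrow> (\<forall>u\<in>V. \<forall>v\<in>V. \<exists>f. graph_automorphism V E f \<and> f u = v)"

definition dominates :: "'a set \<Rightarrow> ('a \<Rightarrow> 'a \<Rightarrow> bool) \<Rightarrow> 'a \<Rightarrow> nat \<Rightarrow> 'a \<Rightarrow> bool" where
  "dominates V E v l u \<longleftrightarrow> gdist V E u v = l"

definition is_eids :: "'a set \<Rightarrow> ('a \<Rightarrow> 'a \<Rightarrow> bool) \<Rightarrow> 'a set \<Rightarrow> ('a \<Rightarrow> nat) \<Rightarrow> bool" where
  "is_eids V E S lab \<longleftrightarrow> S \<subseteq> V \<and> inj_on lab S \<and> (\<exists>v\<in>S. lab v = 0)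
     \<and> (\<forall>u\<in>V. \<exists>v\<in>S. dominates V E v (lab v) u)"

definition k_eids :: "'a set \<Rightarrow> ('a \<Rightarrow> 'a \<Rightarrow> bool) \<Rightarrow> nat \<Rightarrow> 'a set \<Rightarrow> ('a \<Rightarrow> nat) \<Rightarrow> bool" where
  "k_eids V E k S lab \<longleftrightarrow> is_eids V E S lab \<and> card S = k"

definition gamma_e :: "'a set \<Rightarrow> ('a \<Rightarrow> 'a \<Rightarrow> bool) \<Rightarrow> nat" where
  "gamma_e V E = (LEAST k. \<exists>S lab. k_eids V E k S lab)"

definition optimal_eids :: "'a set \<Rightarrow> ('a \<Rightarrow> 'a \<Rightarrow> bool) \<Rightarrow> 'a set \<Rightarrow> ('a \<Rightarrow> nat) \<Rightarrow> bool" where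
  "optimal_eids V E S lab \<longleftrightarrow> is_eids V E S lab \<and> card S = gamma_e V E"

end

theory Submission
  imports Defs
begin

text \<open>
  Vertex transitivity makes the sphere \<open>{u. d(u, x) = l}\<close> have the same size \<open>n\<^sub>l\<close> for
  every centre \<open>x\<close>. The spheres around one vertex partition \<open>V\<close>, so
  \<open>|V| = n\<^sub>0 + \<dots> + n\<^sub>D\<close> with \<open>D = diam \<Gamma>\<close>, and every \<open>n\<^sub>l\<close> with \<open>l \<le> D\<close> is positive
  (a diametral geodesic passes through a vertex at distance exactly \<open>l\<close> from its end).
  The vertices dominated by a labelled vertex form a sphere, and the labels are distinct,
  so a dominating set covers at most the sum of the \<open>n\<^sub>l\<close> over its labels. Omitting any
  \<open>l \<le> D\<close> therefore loses \<open>n\<^sub>l > 0\<close> vertices: every extended irregular dominating set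
  uses all labels \<open>0, \<dots>, D\<close>, hence has at least \<open>D + 1\<close> vertices, and one with labels
  at most \<open>D\<close> has exactly these labels.
\<close>

lemma walk_in_vertices: "walk V E u v n \<Longrightarrow> u \<in> V \<and> v \<in> V"
  by (induction rule: walk.induct) auto

lemma walk_append: "walk V E u w m \<Longrightarrow> walk V E w v n \<Longrightarrow> walk V E u v (m + n)"
  by (induction rule: walk.induct) (auto intro: walk.intros)

lemma walk_split:
  "walk V E u v n \<Longrightarrow> m \<le> n \<Longrightarrow> \<exists>w. walk V E u w m \<and> walk V E w v (n - m)"
proof (induction arbitrary: m rule: walk.induct)
  case (walk_nil u)
  then show ?case by (auto intro: walk.intros)
next
  case (walk_cons u w v n)
  show ?case
  proof (cases m)
    case 0
    then show ?thesis using walk_cons by (auto intro: walk.intros)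
  next
    case (Suc m')
    with walk_cons obtain w' where "walk V E w w' m'" "walk V E w' v (n - m')" by fastforce
    then show ?thesis using walk_cons Suc by (auto intro: walk.intros)
  qed
qed

lemma walk_gdist:
  "connected_graph V E \<Longrightarrow> u \<in> V \<Longrightarrow> v \<in> V \<Longrightarrow> walk V E u v (gdist V E u v)"
  unfolding connected_graph_def gdist_def by (meson LeastI_ex)

lemma gdist_le_walk: "walk V E u v n \<Longrightarrow> gdist V E u v \<le> n"
  unfolding gdist_def by (rule Least_le)

lemma graph_automorphism_inv_into:
  assumes "graph_automorphism V E f"
  shows "graph_automorphism V E (inv_into V f)"
proof -
  have bij: "bij_betw f V V" and edges: "\<forall>x\<in>V. \<forall>y\<in>V. E x y \<longleftrightarrow> E (f x) (f y)"
    using assms unfolding graph_automorphism_def by auto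
  have "E x y \<longleftrightarrow> E (inv_into V f x) (inv_into V f y)" if "x \<in> V" "y \<in> V" for x y
    using edges bij_betw_apply[OF bij_betw_inv_into[OF bij]] that
      bij_betw_inv_into_right[OF bij] by metis
  then show ?thesis
    using bij_betw_inv_into[OF bij] unfolding graph_automorphism_def by blast
qed

lemma walk_graph_automorphism:
  "walk V E u v n \<Longrightarrow> graph_automorphism V E f \<Longrightarrow> walk V E (f u) (f v) n"
  by (induction rule: walk.induct)
    (auto simp: graph_automorphism_def intro: walk.intros bij_betw_apply)

lemma walk_graph_automorphism_iff:
  assumes f: "graph_automorphism V E f" and "u \<in> V" "v \<in> V"
  shows "walk V E (f u) (f v) n \<longleftrightarrow> walk V E u v n"
proof
  assume "walk V E (f u) (f v) n"
  then have "walk V E (inv_into V f (f u)) (inv_into V f (f v)) n"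
    by (rule walk_graph_automorphism[OF _ graph_automorphism_inv_into[OF f]])
  moreover have "inv_into V f (f x) = x" if "x \<in> V" for x
    using f that by (simp add: graph_automorphism_def bij_betw_def)
  ultimately show "walk V E u v n" using assms by simp
next
  assume "walk V E u v n"
  then show "walk V E (f u) (f v) n" by (rule walk_graph_automorphism[OF _ f])
qed

lemma gdist_graph_automorphism:
  assumes "graph_automorphism V E f" "u \<in> V" "v \<in> V"
  shows "gdist V E (f u) (f v) = gdist V E u v"
proof -
  have "walk V E (f u) (f v) = walk V E u v"
    using walk_graph_automorphism_iff[OF assms] by blast
  then show ?thesis unfolding gdist_def by simp
qed

lemma finite_gdist_values: "finite V \<Longrightarrow> finite {gdist V E u v | u v. u \<in> V \<and> v \<in> V}"
  using finite_image_set2[of "\<lambda>u. u \<in> V" "\<lambda>v. v \<in> V" "gdist V E"] by simp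

lemma gdist_le_diam: "finite V \<Longrightarrow> u \<in> V \<Longrightarrow> v \<in> V \<Longrightarrow> gdist V E u v \<le> diam V E"
  unfolding diam_def by (rule Max_ge) (auto intro: finite_gdist_values)

lemma diam_attained:
  assumes "finite V" "V \<noteq> {}"
  obtains a b where "a \<in> V" "b \<in> V" "gdist V E a b = diam V E"
proof -
  have "{gdist V E u v | u v. u \<in> V \<and> v \<in> V} \<noteq> {}" using assms(2) by blast
  then have "diam V E \<in> {gdist V E u v | u v. u \<in> V \<and> v \<in> V}"
    unfolding diam_def by (rule Max_in[OF finite_gdist_values[OF assms(1)]])
  then show ?thesis using that by auto
qed

definition gsphere :: "'a set \<Rightarrow> ('a \<Rightarrow> 'a \<Rightarrow> bool) \<Rightarrow> 'a \<Rightarrow> nat \<Rightarrow> 'a set" where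
  "gsphere V E x l = {u \<in> V. gdist V E u x = l}"

lemma finite_gsphere: "finite V \<Longrightarrow> finite (gsphere V E x l)"
  unfolding gsphere_def by simp

lemma gsphere_graph_automorphism:
  assumes f: "graph_automorphism V E f" and x: "x \<in> V"
  shows "f ` gsphere V E x l = gsphere V E (f x) l"
proof -
  have "f ` gsphere V E x l = f ` {u \<in> V. gdist V E (f u) (f x) = l}"
    unfolding gsphere_def using gdist_graph_automorphism[OF f _ x] by auto
  also have "\<dots> = {w \<in> f ` V. gdist V E w (f x) = l}"
    by blast
  also have "f ` V = V"
    using f unfolding graph_automorphism_def bij_betw_def by simp
  finally show ?thesis unfolding gsphere_def .
qed

lemma card_gsphere_vertex_transitive:
  assumes "vertex_transitive V E" "x \<in> V" "y \<in> V"
  shows "card (gsphere V E x l) = card (gsphere V E y l)"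
proof -
  obtain f where f: "graph_automorphism V E f" "f x = y"
    using assms unfolding vertex_transitive_def by blast
  have "inj_on f (gsphere V E x l)"
    using f(1) unfolding graph_automorphism_def bij_betw_def gsphere_def
    by (auto intro: inj_on_subset)
  then have "card (f ` gsphere V E x l) = card (gsphere V E x l)"
    by (rule card_image)
  then show ?thesis
    unfolding gsphere_graph_automorphism[OF f(1) \<open>x \<in> V\<close>] f(2) by simp
qed

lemma card_vertices_eq_sum_card_gsphere:
  assumes "finite V" "x \<in> V"
  shows "card V = (\<Sum>l\<in>{0..diam V E}. card (gsphere V E x l))"
proof -
  have "V = (\<Union>l\<in>{0..diam V E}. gsphere V E x l)"
    using gdist_le_diam[OF assms(1) _ assms(2)] unfolding gsphere_def by auto
  moreover have "card (\<Union>l\<in>{0..diam V E}. gsphere V E x l)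
      = (\<Sum>l\<in>{0..diam V E}. card (gsphere V E x l))"
    by (rule card_UN_disjoint) (auto simp: finite_gsphere[OF assms(1)], auto simp: gsphere_def)
  ultimately show ?thesis by simp
qed

lemma gsphere_empty_beyond_diam:
  assumes "finite V" "x \<in> V" "diam V E < l"
  shows "gsphere V E x l = {}"
  using gdist_le_diam[OF assms(1) _ assms(2), where E = E] assms(3) unfolding gsphere_def by fastforce

lemma gsphere_nonempty:
  assumes "finite V" "V \<noteq> {}" "connected_graph V E" "vertex_transitive V E" "x \<in> V"
    and "l \<le> diam V E"
  shows "gsphere V E x l \<noteq> {}"
proof -
  obtain a b where ab: "a \<in> V" "b \<in> V" "gdist V E a b = diam V E"
    using diam_attained assms(1,2) by blast
  obtain w where aw: "walk V E a w (diam V E - l)" and wb: "walk V E w b l"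
    using walk_split[OF walk_gdist[OF assms(3) ab(1,2)], of "diam V E - l"] ab(3) assms(6)
    by auto
  have w: "w \<in> V" using walk_in_vertices[OF wb] by simp
  \<comment> \<open>A shortcut from \<open>w\<close> to \<open>b\<close> would give a walk from \<open>a\<close> to \<open>b\<close> shorter than the diameter.\<close>
  have "diam V E \<le> diam V E - l + gdist V E w b"
    using gdist_le_walk[OF walk_append[OF aw walk_gdist[OF assms(3) w ab(2)]]] ab(3) by simp
  then have "gdist V E w b = l" using gdist_le_walk[OF wb] assms(6) by linarith
  then have "gsphere V E b l \<noteq> {}" using w unfolding gsphere_def by blast
  then show ?thesis
    using card_gsphere_vertex_transitive[OF assms(4,5) ab(2)] finite_gsphere[OF assms(1)]
    by (metis card_0_eq)
qed

lemma card_vertices_le_sum_card_gsphere_labels: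
  assumes "finite V" "vertex_transitive V E" "is_eids V E S lab" "x \<in> V"
  shows "card V \<le> (\<Sum>l\<in>lab ` S. card (gsphere V E x l))"
proof -
  have S: "S \<subseteq> V" "finite S" and inj: "inj_on lab S"
    using assms(1,3) finite_subset unfolding is_eids_def by auto
  have "V \<subseteq> (\<Union>v\<in>S. gsphere V E v (lab v))"
    using assms(3) unfolding is_eids_def gsphere_def dominates_def by auto
  then have "card V \<le> card (\<Union>v\<in>S. gsphere V E v (lab v))"
    using S finite_gsphere[OF assms(1)] by (intro card_mono) auto
  also have "\<dots> \<le> (\<Sum>v\<in>S. card (gsphere V E v (lab v)))"
    by (rule card_UN_le[OF S(2)])
  also have "\<dots> = (\<Sum>v\<in>S. card (gsphere V E x (lab v)))"
    using card_gsphere_vertex_transitive[OF assms(2) _ assms(4)] S(1) by (intro sum.cong) auto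
  also have "\<dots> = (\<Sum>l\<in>lab ` S. card (gsphere V E x l))"
    by (simp add: sum.reindex[OF inj])
  finally show ?thesis .
qed

lemma eids_labels_cover_diam:
  assumes "finite V" "V \<noteq> {}" "connected_graph V E" "vertex_transitive V E"
    and "is_eids V E S lab"
  shows "{0..diam V E} \<subseteq> lab ` S"
proof (rule ccontr)
  assume "\<not> ?thesis"
  then obtain l0 where l0: "l0 \<in> {0..diam V E}" "l0 \<notin> lab ` S" by blast
  obtain x where x: "x \<in> V" using assms(2) by blast
  define n where "n l = card (gsphere V E x l)" for l
  have finS: "finite S" using assms(1,5) finite_subset unfolding is_eids_def by blast
  have "card V \<le> sum n (lab ` S)"
    unfolding n_def by (rule card_vertices_le_sum_card_gsphere_labels[OF assms(1,4,5) x])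
  also have "\<dots> = sum n (lab ` S \<inter> {0..diam V E})"
  proof (rule sum.mono_neutral_right)
    have "n l = 0" if "diam V E < l" for l
      using gsphere_empty_beyond_diam[OF assms(1) x that] by (simp add: n_def)
    then show "\<forall>l\<in>lab ` S - lab ` S \<inter> {0..diam V E}. n l = 0"
      by (auto simp: not_le)
  qed (use finS in auto)
  also have "\<dots> \<le> sum n ({0..diam V E} - {l0})"
    using l0 by (intro sum_mono2) auto
  also have "\<dots> < sum n {0..diam V E}"
  proof -
    have "0 < n l0"
      using gsphere_nonempty[OF assms(1-4) x] finite_gsphere[OF assms(1)] l0
      by (simp add: n_def card_gt_0_iff)
    moreover have "n l0 \<le> sum n {0..diam V E}"
      using l0 by (intro member_le_sum) auto
    ultimately show ?thesis using l0 by (simp add: sum_diff1_nat)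
  qed
  also have "\<dots> = card V"
    unfolding n_def by (rule card_vertices_eq_sum_card_gsphere[OF assms(1) x, symmetric])
  finally show False by simp
qed

lemma card_eids_ge_diam:
  assumes "finite V" "V \<noteq> {}" "connected_graph V E" "vertex_transitive V E"
    and "is_eids V E S lab"
  shows "diam V E + 1 \<le> card S"
proof -
  have "finite S" using assms(1,5) finite_subset unfolding is_eids_def by blast
  have "diam V E + 1 = card {0..diam V E}" by simp
  also have "\<dots> \<le> card (lab ` S)"
    using eids_labels_cover_diam[OF assms] \<open>finite S\<close> by (intro card_mono) auto
  also have "\<dots> \<le> card S" by (rule card_image_le[OF \<open>finite S\<close>])
  finally show ?thesis .
qed

lemma gamma_e_eqI:
  assumes "k_eids V E k S lab" and "\<And>k' S' lab'. k_eids V E k' S' lab' \<Longrightarrow> k \<le> k'"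
  shows "gamma_e V E = k"
  unfolding gamma_e_def using assms by (intro Least_equality) blast+

theorem corollary2p6:
  fixes V :: "'a set" and E :: "'a \<Rightarrow> 'a \<Rightarrow> bool" and S :: "'a set"
    and lab :: "'a \<Rightarrow> nat" and k :: nat
  assumes "simple_graph V E" and "V \<noteq> {}" and "connected_graph V E"
    and "vertex_transitive V E"
    and "k_eids V E k S lab"
    and "\<forall>v\<in>S. lab v \<le> diam V E"
  shows "optimal_eids V E S lab \<and> k = gamma_e V E \<and> gamma_e V E = diam V E + 1
         \<and> lab ` S = {0..diam V E}"
proof -
  have fin: "finite V" using assms(1) unfolding simple_graph_def by simp
  have eids: "is_eids V E S lab" and k: "card S = k"
    using assms(5) unfolding k_eids_def by auto
  have labels: "lab ` S = {0..diam V E}"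
    using eids_labels_cover_diam[OF fin assms(2-4) eids] assms(6) by auto
  have "k = diam V E + 1"
    using card_image[of lab S] eids labels k unfolding is_eids_def by simp
  moreover have "gamma_e V E = k"
    using gamma_e_eqI[OF assms(5)] card_eids_ge_diam[OF fin assms(2-4)] \<open>k = diam V E + 1\<close>
    unfolding k_eids_def by metis
  ultimately show ?thesis
    using labels eids k unfolding optimal_eids_def by simp
qed

end
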